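(* Let $q$ be a prime number, $l\ge 2$ an integer, and $\alpha=\alpha_1/\alpha_2\in\mathbb{Q}\text{-}\mathcal{KS}(q^{l})$. Then $\alpha\in[-1,0[$ if and only if there exists a positive integer $d$ with $d\mid(q^{l}-q)$ such that $$\alpha=q-\frac{d}{\alpha_2}\quad\text{and}\quad \alpha_2\in\Bigl\{\Bigl\lceil\frac{d}{q+1}\Bigr\rceil,\dots,\Bigl\lceil\frac{d}{q}\Bigr\rceil-1\Bigr\}.$$
   Context: Every nonzero rational $\alpha$ is written $\alpha=\alpha_1/\alpha_2$ with $\alpha_1\in\mathbb{Z}$, $\alpha_2$ a positive integer and $\gcd(\alpha_1,\alpha_2)=1$. For an integer $N\ge 2$ and a nonzero rational $\alpha=\alpha_1/\alpha_2$, $N$ is called an $\alpha$-Korselt number if $N\neq\alpha$ and $\alpha_2p-\alpha_1$ divides $\alpha_2N-\alpha_1$ (in $\mathbb{Z}$) for every prime divisor $p$ of $N$. $\mathbb{Q}\text{-}\mathcal{KS}(N)$ is the set of all $\beta\in\mathbb{Q}\setminus\{0,N\}$ such that $N$ is a $\beta$-Korselt number. $[-1,0[=\{x:-1\le x<0\}$; $\lceil\cdot\rceil$ is the ceiling function; $\{a,\dots,b\}$ is the set of integers from $a$ to $b$ (empty if $a>b$). *)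

theory Defs
  imports Complex_Main "HOL-Computational_Algebra.Primes"
begin

text \<open>A nonzero rational alpha is written alpha1/alpha2 with alpha2 > 0 and
  gcd(alpha1,alpha2) = 1; this is exactly quotient_of alpha = (alpha1, alpha2).\<close>

definition num_of :: "rat \<Rightarrow> int" where
  "num_of \<alpha> = fst (quotient_of \<alpha>)"

definition den_of :: "rat \<Rightarrow> int" where
  "den_of \<alpha> = snd (quotient_of \<alpha>)"

definition korselt :: "nat \<Rightarrow> rat \<Rightarrow> bool" where
  "korselt N \<alpha> \<longleftrightarrow> N \<ge> 2 \<and> \<alpha> \<noteq> 0 \<and> \<alpha> \<noteq> of_nat N \<and>
     (\<forall>p::nat. prime p \<and> p dvd N \<longrightarrow>
        (den_of \<alpha> * int p - num_of \<alpha>) dvd (den_of \<alpha> * int N - num_of \<alpha>))"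

definition Q_KS :: "nat \<Rightarrow> rat set" where
  "Q_KS N = {\<beta>. \<beta> \<noteq> 0 \<and> \<beta> \<noteq> of_nat N \<and> korselt N \<beta>}"

end

theory Submission
  imports Defs
begin

text \<open>Write \<alpha> = a/b and put d = bq - a, the only d for which \<alpha> = q - d/b. For every prime
  divisor p of N the Korselt condition gives bp - a | bN - a, hence bp - a | b(N - p); since
  gcd(bp - a, b) = gcd(a, b) = 1 this yields bp - a | N - p, so the divisibility requirement
  on d holds automatically. What remains is arithmetic: the ceiling conditions say
  bq < d \<le> b(q + 1), i.e. -b \<le> a < 0, i.e. -1 \<le> \<alpha> < 0.\<close>

lemma quotient_of_eq_num_den: "quotient_of \<alpha> = (num_of \<alpha>, den_of \<alpha>)"
  by (simp add: num_of_def den_of_def)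

lemma den_of_pos: "den_of \<alpha> > 0"
  using quotient_of_denom_pos[OF quotient_of_eq_num_den] .

lemma coprime_num_den: "coprime (num_of \<alpha>) (den_of \<alpha>)"
  using quotient_of_coprime[OF quotient_of_eq_num_den] .

lemma rat_eq_num_div_den: "\<alpha> = of_int (num_of \<alpha>) / of_int (den_of \<alpha>)"
  using quotient_of_div[OF quotient_of_eq_num_den] .

lemma eq_of_int_minus_div_den_iff:
  "\<alpha> = of_int c - of_int d / of_int (den_of \<alpha>) \<longleftrightarrow> d = den_of \<alpha> * c - num_of \<alpha>"
proof -
  have "\<alpha> = of_int c - of_int d / of_int (den_of \<alpha>) \<longleftrightarrow>
      (of_int (num_of \<alpha>) :: rat) = of_int (c * den_of \<alpha> - d)"
    using den_of_pos[of \<alpha>] by (subst (1) rat_eq_num_div_den) (auto simp: field_simps)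
  then show ?thesis
    by (simp only: of_int_eq_iff) (auto simp: algebra_simps)
qed

lemma in_neg_one_zero_iff_num_den:
  "-1 \<le> \<alpha> \<and> \<alpha> < 0 \<longleftrightarrow> - den_of \<alpha> \<le> num_of \<alpha> \<and> num_of \<alpha> < 0"
proof -
  have "(0 :: rat) < of_int (den_of \<alpha>)"
    using den_of_pos[of \<alpha>] by simp
  then have "-1 \<le> \<alpha> \<and> \<alpha> < 0 \<longleftrightarrow>
      - of_int (den_of \<alpha>) \<le> (of_int (num_of \<alpha>) :: rat) \<and> of_int (num_of \<alpha>) < (0 :: rat)"
    by (subst (1 2) rat_eq_num_div_den) (simp add: le_divide_eq divide_less_0_iff)
  then show ?thesis
    by linarith
qed

lemma mem_ceiling_interval_iff:
  fixes b d :: int and q :: nat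
  assumes "q > 0"
  shows "b \<in> {\<lceil>of_int d / (of_nat q + 1 :: 'a :: floor_ceiling)\<rceil> .. \<lceil>of_int d / (of_nat q :: 'a)\<rceil> - 1}
    \<longleftrightarrow> b * int q < d \<and> d \<le> b * (int q + 1)"
proof -
  have "b \<in> {\<lceil>of_int d / (of_nat q + 1 :: 'a)\<rceil> .. \<lceil>of_int d / (of_nat q :: 'a)\<rceil> - 1}
      \<longleftrightarrow> of_int d / (of_nat q + 1) \<le> (of_int b :: 'a) \<and> of_int b < (of_int d / of_nat q :: 'a)"
    by (auto simp: ceiling_le_iff less_ceiling_iff)
  also have "\<dots> \<longleftrightarrow> of_int (b * int q) < (of_int d :: 'a) \<and> of_int d \<le> (of_int (b * (int q + 1)) :: 'a)"
    using assms by (auto simp: divide_le_eq less_divide_eq add_pos_pos algebra_simps)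
  also have "\<dots> \<longleftrightarrow> b * int q < d \<and> d \<le> b * (int q + 1)"
    by (simp only: of_int_less_iff of_int_le_iff)
  finally show ?thesis .
qed

lemma coprime_den_mult_minus_num: "coprime (den_of \<alpha> * c - num_of \<alpha>) (den_of \<alpha>)"
proof (rule coprimeI)
  fix e
  assume e: "e dvd den_of \<alpha> * c - num_of \<alpha>" "e dvd den_of \<alpha>"
  have "e dvd den_of \<alpha> * c - (den_of \<alpha> * c - num_of \<alpha>)"
    using dvd_mult2[OF e(2)] e(1) by (rule dvd_diff)
  then have "e dvd num_of \<alpha>"
    by simp
  with e(2) show "is_unit e"
    using coprime_num_den coprime_common_divisor by blast
qed

lemma korselt_dvd_diff:
  assumes "korselt N \<alpha>" and "prime p" and "p dvd N"
  shows "(den_of \<alpha> * int p - num_of \<alpha>) dvd (int N - int p)"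
proof -
  let ?d = "den_of \<alpha> * int p - num_of \<alpha>"
  have "?d dvd den_of \<alpha> * int N - num_of \<alpha>"
    using assms unfolding korselt_def by blast
  then have "?d dvd (den_of \<alpha> * int N - num_of \<alpha>) - ?d"
    by (rule dvd_diff) simp
  then have "?d dvd den_of \<alpha> * (int N - int p)"
    by (simp add: algebra_simps)
  then show ?thesis
    using coprime_den_mult_minus_num coprime_dvd_mult_right_iff by blast
qed

theorem proposition5p7:
  fixes q l :: nat and \<alpha> :: rat
  assumes "prime q" and "l \<ge> 2" and "\<alpha> \<in> Q_KS (q ^ l)"
  shows "(-1 \<le> \<alpha> \<and> \<alpha> < 0) \<longleftrightarrow>
    (\<exists>d::int. d > 0 \<and> d dvd (int q ^ l - int q) \<and>
       \<alpha> = of_nat q - of_int d / of_int (den_of \<alpha>) \<and>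
       den_of \<alpha> \<in> {\<lceil>of_int d / (of_nat q + 1 :: rat)\<rceil> .. \<lceil>of_int d / (of_nat q :: rat)\<rceil> - 1})"
proof -
  define b where "b = den_of \<alpha>"
  define d where "d = b * int q - num_of \<alpha>"
  have "q > 0"
    using assms(1) prime_gt_0_nat by blast
  have d_dvd: "d dvd int q ^ l - int q"
    using korselt_dvd_diff[of "q ^ l" \<alpha> q] assms
    by (simp add: Q_KS_def d_def b_def dvd_power)
  have \<alpha>_iff: "\<alpha> = of_nat q - of_int e / of_int b \<longleftrightarrow> e = d" for e
    using eq_of_int_minus_div_den_iff[of \<alpha> "int q" e] by (simp add: b_def d_def)
  have "(-1 \<le> \<alpha> \<and> \<alpha> < 0) \<longleftrightarrow> b * int q < d \<and> d \<le> b * (int q + 1)"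
    using in_neg_one_zero_iff_num_den[of \<alpha>] by (auto simp: b_def d_def algebra_simps)
  also have "\<dots> \<longleftrightarrow> d > 0 \<and> b \<in> {\<lceil>of_int d / (of_nat q + 1 :: rat)\<rceil> .. \<lceil>of_int d / (of_nat q :: rat)\<rceil> - 1}"
    using mem_ceiling_interval_iff[OF \<open>q > 0\<close>, of b d, where 'a = rat] den_of_pos[of \<alpha>]
    by (auto simp: b_def intro: le_less_trans[rotated])
  finally show ?thesis
    using d_dvd \<alpha>_iff unfolding b_def by auto
qed

end
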